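(* Let $s:\mathcal{X}\times\mathcal{Y}\to\mathbb{R}$ be a fixed measurable nonconformity score, $S_1,\dots,S_d$ probability distributions on $\mathcal{X}\times\mathcal{Y}$, $f$ a function as described in the context, $\rho>0$ and $\alpha\in(0,1)$. For each $i\in[d]$ let $(X_{ij},Y_{ij})_{j=1}^{m_i}$ be i.i.d. from $S_i$, $V_{ij}=s(X_{ij},Y_{ij})$, $\hat F_i(x)=\frac{1}{m_i}\sum_{j=1}^{m_i}\mathbb{I}_{(-\infty,x]}(V_{ij})$ and $\hat F_{\min}(x)=\min_i\hat F_i(x)$. Let $(X_{n+1},Y_{n+1})$ be such that $V_{n+1}=s(X_{n+1},Y_{n+1})\sim P$ for some $P\in\mathcal{P}_{f,\rho}$, with $V_{n+1}$ independent of $\{V_{ij}\}$. For arbitrary $\epsilon>0$ set $$\alpha'=1-g_{f,\rho}\left(\epsilon+g_{f,\rho}^{-1}\left(\frac{1-\alpha}{1-2\sum_{i=1}^de^{-2m_i\epsilon^2}}\right)\right),$$ $t\coloneqq\mathcal{Q}\left(g_{f,\rho}^{-1}(1-\alpha');\hat F_{\min}\right)$ and $\widetilde{\mathcal{C}}(x)\coloneqq\{y\in\mathcal{Y}:s(x,y)\le t\}$. Then $$\mathbb{P}\left(Y_{n+1}\in\widetilde{\mathcal{C}}(X_{n+1})\right)\ge1-\alpha.$$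
   Context: $f:\mathbb{R}\to\mathbb{R}\cup\{+\infty\}$ is a closed convex function with $f(1)=0$ and $f(t)=+\infty$ for $t<0$; for $P\ll Q$, $D_f(P\Vert Q)\coloneqq\int f\left(\frac{dP}{dQ}\right)dQ$. $\mathcal{CH}(P_1,\dots,P_d)\coloneqq\{\sum_i\lambda_iP_i:\lambda_i\ge0,\sum_i\lambda_i=1\}$; $s\#T$ is the push-forward $(s\#T)(A)=T(s^{-1}(A))$. $\mathcal{P}_{f,\rho}\coloneqq\{S\text{ a distribution on }\mathbb{R}:\exists S_0\in\mathcal{CH}(s\#S_1,\dots,s\#S_d),\ D_f(S\Vert S_0)\le\rho\}$. $g_{f,\rho}(\beta)\coloneqq\inf\{z\in[0,1]:\beta f(z/\beta)+(1-\beta)f((1-z)/(1-\beta))\le\rho\}$ for $\beta\in[0,1]$, and $g_{f,\rho}^{-1}(\tau)\coloneqq\sup\{\beta\in[0,1]:g_{f,\rho}(\beta)\le\tau\}$. For a c.d.f. $F$, $\mathcal{Q}(\beta;F)\coloneqq\inf\{q:F(q)\ge\beta\}$. *)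

theory Defs
  imports "HOL-Probability.Probability"
begin

definition closed_convex_fdiv_fun :: "(real \<Rightarrow> ereal) \<Rightarrow> bool" where
  "closed_convex_fdiv_fun f \<longleftrightarrow>
     (\<forall>t. f t \<noteq> -\<infinity>) \<and>
     (\<forall>x y u. 0 \<le> u \<and> u \<le> 1 \<longrightarrow>
        f (u * x + (1 - u) * y) \<le> ereal u * f x + ereal (1 - u) * f y) \<and>
     closed {p :: real \<times> real. f (fst p) \<le> ereal (snd p)} \<and>
     f 1 = 0 \<and>
     (\<forall>t<0. f t = \<infinity>)"

text \<open>D_f(P||Q) = integral of f(dP/dQ) dQ (positive part minus negative part), meant for P << Q.\<close>
definition fdiv :: "(real \<Rightarrow> ereal) \<Rightarrow> 'a measure \<Rightarrow> 'a measure \<Rightarrow> ereal" where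
  "fdiv f P Q =
     enn2ereal (\<integral>\<^sup>+ x. e2ennreal (max 0 (f (enn2real (RN_deriv Q P x)))) \<partial>Q)
   - enn2ereal (\<integral>\<^sup>+ x. e2ennreal (max 0 (- f (enn2real (RN_deriv Q P x)))) \<partial>Q)"

definition mixtures :: "(nat \<Rightarrow> real measure) \<Rightarrow> nat \<Rightarrow> real measure set" where
  "mixtures Ps d = {Q. sets Q = sets borel \<and>
     (\<exists>lam :: nat \<Rightarrow> real. (\<forall>i<d. 0 \<le> lam i) \<and> (\<Sum>i<d. lam i) = 1 \<and>
        (\<forall>A\<in>sets borel. emeasure Q A = (\<Sum>i<d. ennreal (lam i) * emeasure (Ps i) A)))}"

text \<open>P_{f,rho}: distributions S on R with D_f(S||S0) <= rho for some S0 in CH(s#S_1,...,s#S_d)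
  (D_f only defined for S << S0).\<close>
definition Pfr :: "(real \<Rightarrow> ereal) \<Rightarrow> real \<Rightarrow> ('a \<Rightarrow> real) \<Rightarrow> (nat \<Rightarrow> 'a measure) \<Rightarrow> nat
    \<Rightarrow> real measure set" where
  "Pfr f \<rho> s S d = {P. prob_space P \<and> sets P = sets borel \<and>
     (\<exists>S0 \<in> mixtures (\<lambda>i. distr (S i) borel s) d.
        absolutely_continuous S0 P \<and> fdiv f P S0 \<le> ereal \<rho>)}"

definition persp :: "(real \<Rightarrow> ereal) \<Rightarrow> real \<Rightarrow> real \<Rightarrow> ereal" where
  "persp f b z = (if b = 0 then (if z = 0 then 0 else \<infinity>) else ereal b * f (z / b))"

definition g_fr :: "(real \<Rightarrow> ereal) \<Rightarrow> real \<Rightarrow> real \<Rightarrow> real" where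
  "g_fr f \<rho> \<beta> = Inf {z \<in> {0..1}. persp f \<beta> z + persp f (1 - \<beta>) (1 - z) \<le> ereal \<rho>}"

definition g_fr_inv :: "(real \<Rightarrow> ereal) \<Rightarrow> real \<Rightarrow> real \<Rightarrow> real" where
  "g_fr_inv f \<rho> \<tau> = Sup {\<beta> \<in> {0..1}. g_fr f \<rho> \<beta> \<le> \<tau>}"

definition emp_cdf :: "(nat \<Rightarrow> real) \<Rightarrow> nat \<Rightarrow> real \<Rightarrow> real" where
  "emp_cdf vs k x = (\<Sum>j<k. indicator {..x} (vs j)) / real k"

definition quantile :: "real \<Rightarrow> (real \<Rightarrow> real) \<Rightarrow> real" where
  "quantile \<beta> F = Inf {q. F q \<ge> \<beta>}"

end

(*
  Let tau = (1 - alpha) / (1 - 2 * sum_i exp (-2 m_i eps^2)) and b = g_fr_inv tau.  Take a level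
  L slightly above b and let a be the largest of the L-quantiles of the score laws s#S_i.  Then
  every s#S_i, hence the mixture S0, gives (-inf, a] mass at least L > b, and the data-processing
  inequality for D_f applied to the partition {(-inf, a], (a, inf)} yields
  P (V <= a) >= g_fr (S0 (-inf, a]) > tau for the test score V.  For the index i attaining the
  maximum, s#S_i (-inf, a) <= L, so by Hoeffding's inequality the left limit at a of the i-th
  empirical c.d.f. stays below b + eps <= g_fr_inv (1 - alpha') except with probability
  2 exp (-2 m_i eps^2).  Outside that event V <= a forces V <= t, and the independence of V from
  the calibration scores multiplies the two bounds to tau * (1 - 2 * sum_i ...) = 1 - alpha.
*)
theory Submission
  imports Defs
begin


lemma fdiv_fun_not_MInf: "closed_convex_fdiv_fun f \<Longrightarrow> f t \<noteq> -\<infinity>"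
  unfolding closed_convex_fdiv_fun_def by blast

lemma fdiv_fun_one: "closed_convex_fdiv_fun f \<Longrightarrow> f 1 = 0"
  unfolding closed_convex_fdiv_fun_def by blast

lemma fdiv_fun_finite_iff: "closed_convex_fdiv_fun f \<Longrightarrow> f t \<noteq> \<infinity> \<longleftrightarrow> (\<exists>r. f t = ereal r)"
  using fdiv_fun_not_MInf[of f t] by (cases "f t") auto

lemma fdiv_fun_convex:
  assumes "closed_convex_fdiv_fun f" "0 \<le> u" "u \<le> 1" "f x = ereal a" "f y = ereal b"
  shows "f (u * x + (1 - u) * y) \<le> ereal (u * a + (1 - u) * b)"
proof -
  have "f (u * x + (1 - u) * y) \<le> ereal u * f x + ereal (1 - u) * f y"
    using assms(1-3) unfolding closed_convex_fdiv_fun_def by blast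
  then show ?thesis using assms(4,5) by simp
qed

lemma fdiv_fun_between:
  assumes f: "closed_convex_fdiv_fun f" and "x \<le> z" "z \<le> y" "f x = ereal a" "f y = ereal b"
  shows "f z \<le> ereal (max a b)"
proof (cases "x = y")
  case True
  then show ?thesis using assms by auto
next
  case False
  define u where "u = (y - z) / (y - x)"
  have u: "0 \<le> u" "u \<le> 1" and "u * (y - x) = y - z"
    using assms False by (auto simp: u_def)
  then have z: "z = u * x + (1 - u) * y" by (simp add: algebra_simps)
  have "f z \<le> ereal (u * a + (1 - u) * b)"
    using fdiv_fun_convex[OF f u assms(4,5)] unfolding z .
  also have "u * a + (1 - u) * b \<le> u * max a b + (1 - u) * max a b"
    using u by (intro add_mono mult_left_mono) auto
  also have "\<dots> = max a b" by (simp add: left_diff_distrib)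
  finally show ?thesis by simp
qed

lemma fdiv_fun_slope_mono:
  assumes f: "closed_convex_fdiv_fun f" and "s < x" "x < t"
    and "f s = ereal fs" "f x = ereal fx" "f t = ereal ft"
  shows "(fx - fs) / (x - s) \<le> (ft - fx) / (t - x)"
proof -
  define u where "u = (t - x) / (t - s)"
  have u: "0 \<le> u" "u \<le> 1" and ut: "u * (t - s) = t - x"
    using assms by (auto simp: u_def)
  then have x: "x = u * s + (1 - u) * t" by (simp add: algebra_simps)
  have "fx \<le> u * fs + (1 - u) * ft"
    using fdiv_fun_convex[OF f u assms(4,6)] assms(5) x by simp
  then have "(t - s) * fx \<le> (t - s) * (u * fs + (1 - u) * ft)"
    using assms by (intro mult_left_mono) auto
  also have "\<dots> = (u * (t - s)) * fs + (t - s) * ft - (u * (t - s)) * ft"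
    by (simp add: algebra_simps)
  also have "\<dots> = (t - x) * fs + (x - s) * ft"
    unfolding ut by (simp add: algebra_simps)
  finally have "(fx - fs) * (t - x) \<le> (ft - fx) * (x - s)"
    by (simp add: algebra_simps)
  then show ?thesis
    using assms by (simp add: field_simps)
qed

lemma fdiv_fun_supporting_line:
  assumes f: "closed_convex_fdiv_fun f" and "lo < x0" "x0 < hi" "f lo \<noteq> \<infinity>" "f hi \<noteq> \<infinity>"
  obtains y0 k where "f x0 = ereal y0" "\<And>t. ereal (y0 + k * (t - x0)) \<le> f t"
proof -
  obtain a b where ab: "f lo = ereal a" "f hi = ereal b"
    using assms fdiv_fun_finite_iff[OF f] by blast
  obtain y0 where y0: "f x0 = ereal y0"
    using fdiv_fun_between[OF f _ _ ab] assms fdiv_fun_finite_iff[OF f, of x0]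
    by (metis ereal_infty_less_eq(1) less_imp_le PInfty_neq_ereal(1))
  define slopes where "slopes = {(y0 - real_of_ereal (f s)) / (x0 - s) | s. s < x0 \<and> f s \<noteq> \<infinity>}"
  define k where "k = Sup slopes"
  have slope_le: "(y0 - fs) / (x0 - s) \<le> (ft - y0) / (t - x0)"
    if "s < x0" "x0 < t" "f s = ereal fs" "f t = ereal ft" for s t fs ft
    using fdiv_fun_slope_mono[OF f that(1,2) that(3) y0 that(4)] .
  have ne: "slopes \<noteq> {}" using assms unfolding slopes_def by auto
  have bdd: "bdd_above slopes"
    unfolding slopes_def bdd_above_def
    using slope_le[OF _ assms(3) _ ab(2)] fdiv_fun_finite_iff[OF f] by fastforce
  have "ereal (y0 + k * (t - x0)) \<le> f t" for t
  proof -
    consider "f t = \<infinity>" | ft where "f t = ereal ft" "t < x0" | ft where "f t = ereal ft" "t = x0"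
      | ft where "f t = ereal ft" "x0 < t"
      using fdiv_fun_finite_iff[OF f, of t] by (metis linorder_neqE_linordered_idom)
    then show ?thesis
    proof cases
      case (2 ft)
      have "(y0 - ft) / (x0 - t) \<in> slopes" unfolding slopes_def using 2 by force
      then have "(y0 - ft) / (x0 - t) \<le> k" unfolding k_def using bdd by (rule cSup_upper)
      then show ?thesis using 2 by (simp add: field_simps)
    next
      case (4 ft)
      have "k \<le> (ft - y0) / (t - x0)"
        unfolding k_def using ne
        by (rule cSup_least) (use slope_le 4 fdiv_fun_finite_iff[OF f] in \<open>force simp: slopes_def\<close>)
      then show ?thesis using 4 by (simp add: field_simps)
    qed (use y0 in auto)
  qed
  with y0 show ?thesis by (rule that)
qed

lemma fdiv_fun_affine_minorant:
  assumes f: "closed_convex_fdiv_fun f"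
  obtains c k where "\<And>t. ereal (c + k * t) \<le> f t"
proof (cases "\<exists>lo hi. lo < hi \<and> f lo \<noteq> \<infinity> \<and> f hi \<noteq> \<infinity>")
  case True
  then obtain lo hi where "lo < hi" and fin: "f lo \<noteq> \<infinity>" "f hi \<noteq> \<infinity>" by blast
  then have "lo < (lo + hi) / 2" "(lo + hi) / 2 < hi" by auto
  then obtain y0 k where "\<And>t. ereal (y0 + k * (t - (lo + hi) / 2)) \<le> f t"
    using fdiv_fun_supporting_line[OF f _ _ fin] by metis
  then show ?thesis
    by (intro that[of "y0 - k * ((lo + hi) / 2)" k]) (simp add: algebra_simps)
next
  case False
  \<comment> \<open>then \<open>f\<close> is finite only at \<open>1\<close>, where it vanishes\<close>
  have "f t = \<infinity>" if "t \<noteq> 1" for t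
  proof (rule ccontr)
    assume "f t \<noteq> \<infinity>"
    moreover have "f 1 \<noteq> \<infinity>" using fdiv_fun_one[OF f] by simp
    ultimately show False using False that by (metis linorder_neqE_linordered_idom)
  qed
  then have "f t \<ge> 0" for t
    using fdiv_fun_one[OF f] by (cases "t = 1") auto
  then show ?thesis by (intro that[of 0 0]) (simp add: zero_ereal_def)
qed

lemma fdiv_fun_borel_measurable:
  assumes f: "closed_convex_fdiv_fun f"
  shows "f \<in> borel_measurable borel"
  unfolding borel_measurable_ereal_iff_Iio
proof
  fix a :: ereal
  have "is_interval (f -` {..<a})"
    unfolding is_interval_1
  proof (intro ballI allI impI)
    fix x y z assume xy: "x \<in> f -` {..<a}" "y \<in> f -` {..<a}" and "x \<le> z \<and> z \<le> y"
    have "f x \<noteq> \<infinity>" "f y \<noteq> \<infinity>" using xy by auto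
    then obtain fx fy where fxy: "f x = ereal fx" "f y = ereal fy"
      using fdiv_fun_finite_iff[OF f] by blast
    have "f z \<le> ereal (max fx fy)"
      using fdiv_fun_between[OF f _ _ fxy] \<open>x \<le> z \<and> z \<le> y\<close> by blast
    also have "ereal (max fx fy) < a"
      using xy fxy by (simp add: max_def)
    finally show "z \<in> f -` {..<a}" by simp
  qed
  then show "f -` {..<a} \<inter> space borel \<in> sets borel"
    by (simp add: real_interval_borel_measurable)
qed

section \<open>Jensen's inequality on a measurable set\<close>

lemma set_integral_ge_affine:
  fixes g G :: "'a \<Rightarrow> real"
  assumes Q: "finite_measure Q" and g: "integrable Q g" and G: "integrable Q G" and A: "A \<in> sets Q"
    and le: "AE x in Q. c + k * g x \<le> G x"
  shows "measure Q A * c + k * (\<integral>x. indicator A x * g x \<partial>Q) \<le> (\<integral>x. indicator A x * G x \<partial>Q)"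
proof -
  interpret finite_measure Q by fact
  have int_A: "integrable Q (\<lambda>x. indicator A x * h x)" if "integrable Q h" for h :: "'a \<Rightarrow> real"
    using integrable_mult_indicator[OF A that] by simp
  have int_ind: "integrable Q (indicator A :: 'a \<Rightarrow> real)"
    using A by (simp add: emeasure_eq_measure)
  have int_lhs: "integrable Q (\<lambda>x. indicator A x * c + k * (indicator A x * g x))"
    by (intro Bochner_Integration.integrable_add integrable_mult_right int_A g) (simp add: int_ind)
  have "measure Q A * c + k * (\<integral>x. indicator A x * g x \<partial>Q)
      = (\<integral>x. indicator A x * c + k * (indicator A x * g x) \<partial>Q)"
    using A int_ind by (subst Bochner_Integration.integral_add) (auto intro: int_A g)
  also have "\<dots> \<le> (\<integral>x. indicator A x * G x \<partial>Q)"
  proof (rule integral_mono_AE[OF int_lhs int_A[OF G]])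
    show "AE x in Q. indicator A x * c + k * (indicator A x * g x) \<le> indicator A x * G x"
      using le by eventually_elim (simp add: indicator_def algebra_simps)
  qed
  finally show ?thesis .
qed

lemma AE_on_set_eq_of_set_integral_eq:
  fixes g :: "'a \<Rightarrow> real"
  assumes Q: "finite_measure Q" and g: "integrable Q g" and A: "A \<in> sets Q"
    and ge: "AE x in Q. x \<in> A \<longrightarrow> c \<le> g x"
    and eq: "(\<integral>x. indicator A x * g x \<partial>Q) = measure Q A * c"
  shows "AE x in Q. x \<in> A \<longrightarrow> g x = c"
proof -
  interpret finite_measure Q by fact
  have int_A: "integrable Q (\<lambda>x. indicator A x * h x)" if "integrable Q h" for h :: "'a \<Rightarrow> real"
    using integrable_mult_indicator[OF A that] by simp
  have int_ind: "integrable Q (indicator A :: 'a \<Rightarrow> real)"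
    using A by (simp add: emeasure_eq_measure)
  have int: "integrable Q (\<lambda>x. indicator A x * g x - indicator A x * c)"
    by (intro Bochner_Integration.integrable_diff int_A g) (simp add: int_ind)
  have "(\<integral>x. indicator A x * g x - indicator A x * c \<partial>Q) = 0"
    using A eq int_ind by (subst Bochner_Integration.integral_diff) (auto intro: int_A g)
  moreover have "AE x in Q. 0 \<le> indicator A x * g x - indicator A x * c"
    using ge by eventually_elim (simp add: indicator_def)
  ultimately have "AE x in Q. indicator A x * g x - indicator A x * c = 0"
    using integral_nonneg_eq_0_iff_AE[OF int] by simp
  then show ?thesis by eventually_elim (simp add: indicator_def)
qed

lemma AE_on_set_eq_at_dom_boundary:
  fixes r :: "'a \<Rightarrow> real"
  assumes Q: "finite_measure Q" and r: "integrable Q r" and A: "A \<in> sets Q"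
    and fin: "AE x in Q. f (r x) \<noteq> \<infinity>"
    and mean: "(\<integral>x. indicator A x * r x \<partial>Q) = measure Q A * x0"
    and boundary: "(\<forall>t<x0. f t = \<infinity>) \<or> (\<forall>t>x0. f t = \<infinity>)"
  shows "AE x in Q. x \<in> A \<longrightarrow> r x = x0"
  using boundary
proof
  assume dom: "\<forall>t<x0. f t = \<infinity>"
  have "AE x in Q. x \<in> A \<longrightarrow> x0 \<le> r x"
    using fin by eventually_elim (use dom in \<open>auto simp: not_less[symmetric]\<close>)
  then show ?thesis by (rule AE_on_set_eq_of_set_integral_eq[OF Q r A _ mean])
next
  assume dom: "\<forall>t>x0. f t = \<infinity>"
  have "AE x in Q. x \<in> A \<longrightarrow> - x0 \<le> - r x"
    using fin by eventually_elim (use dom in \<open>auto simp: not_less[symmetric]\<close>)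
  moreover have "(\<integral>x. indicator A x * - r x \<partial>Q) = measure Q A * - x0"
    using mean by simp
  ultimately have "AE x in Q. x \<in> A \<longrightarrow> - r x = - x0"
    by (intro AE_on_set_eq_of_set_integral_eq[OF Q _ A]) (use r in simp_all)
  then show ?thesis by simp
qed

lemma jensen_set_integral:
  fixes f :: "real \<Rightarrow> ereal" and Q :: "'a measure" and r :: "'a \<Rightarrow> real"
  defines "G \<equiv> \<lambda>x. real_of_ereal (f (r x))"
  assumes f: "closed_convex_fdiv_fun f" and Q: "finite_measure Q" and r: "integrable Q r"
    and fin: "AE x in Q. f (r x) \<noteq> \<infinity>" and G: "integrable Q G" and A: "A \<in> sets Q"
    and pos: "0 < measure Q A" and mean: "(\<integral>x. indicator A x * r x \<partial>Q) = measure Q A * x0"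
  obtains y0 where "f x0 = ereal y0" "measure Q A * y0 \<le> (\<integral>x. indicator A x * G x \<partial>Q)"
proof -
  interpret finite_measure Q by fact
  have fG: "AE x in Q. f (r x) = ereal (G x)"
    using fin by eventually_elim (use fdiv_fun_finite_iff[OF f] in \<open>auto simp: G_def\<close>)
  \<comment> \<open>either \<open>x0\<close> is interior to the domain of \<open>f\<close>, or \<open>r = x0\<close> almost everywhere on \<open>A\<close>\<close>
  show ?thesis
  proof (cases "(\<exists>lo<x0. f lo \<noteq> \<infinity>) \<and> (\<exists>hi>x0. f hi \<noteq> \<infinity>)")
    case True
    then obtain y0 k where y0: "f x0 = ereal y0" and line: "\<And>t. ereal (y0 + k * (t - x0)) \<le> f t"
      using fdiv_fun_supporting_line[OF f] by metis
    have "AE x in Q. (y0 - k * x0) + k * r x \<le> G x"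
      using fG
    proof eventually_elim
      case (elim x)
      then show ?case using line[of "r x"] by (simp add: algebra_simps)
    qed
    from set_integral_ge_affine[OF Q r G A this]
    have "measure Q A * y0 \<le> (\<integral>x. indicator A x * G x \<partial>Q)"
      unfolding mean by (simp add: algebra_simps)
    with y0 show ?thesis by (rule that)
  next
    case False
    then have "AE x in Q. x \<in> A \<longrightarrow> r x = x0"
      by (intro AE_on_set_eq_at_dom_boundary[OF Q r A fin mean]) auto
    then have on_A: "AE x in Q. x \<in> A \<longrightarrow> f x0 = ereal (G x)"
      using fG by eventually_elim auto
    have "f x0 \<noteq> \<infinity>"
    proof
      assume "f x0 = \<infinity>"
      then have "AE x in Q. x \<notin> A" using on_A by simp
      then have "A \<in> null_sets Q" using AE_iff_null_sets[OF A] by simp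
      then show False using pos by (simp add: measure_def null_setsD1)
    qed
    then obtain y0 where y0: "f x0 = ereal y0" using fdiv_fun_finite_iff[OF f] by blast
    have "(\<integral>x. indicator A x * G x \<partial>Q) = (\<integral>x. indicator A x * y0 \<partial>Q)"
    proof (rule integral_cong_AE)
      show "AE x in Q. indicator A x * G x = indicator A x * y0"
        using on_A by eventually_elim (simp add: y0 indicator_def)
    qed (use A borel_measurable_integrable[OF G] in measurable)
    with A show ?thesis by (intro that[OF y0]) simp
  qed
qed

lemma persp_le_set_integral:
  fixes f :: "real \<Rightarrow> ereal" and Q :: "'a measure" and r :: "'a \<Rightarrow> real"
  defines "G \<equiv> \<lambda>x. real_of_ereal (f (r x))"
  assumes f: "closed_convex_fdiv_fun f" and Q: "finite_measure Q" and r: "integrable Q r"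
    and fin: "AE x in Q. f (r x) \<noteq> \<infinity>" and G: "integrable Q G" and A: "A \<in> sets Q"
  shows "persp f (measure Q A) (\<integral>x. indicator A x * r x \<partial>Q) \<le> ereal (\<integral>x. indicator A x * G x \<partial>Q)"
proof (cases "measure Q A = 0")
  case True
  interpret finite_measure Q by fact
  have "AE x in Q. x \<notin> A"
    using A True by (intro AE_not_in) (simp add: emeasure_eq_measure null_sets_def)
  then have "(\<integral>x. indicator A x * h x \<partial>Q) = 0" for h :: "'a \<Rightarrow> real"
    by (intro integral_eq_zero_AE) (auto elim!: eventually_mono)
  then show ?thesis using True by (simp add: persp_def)
next
  case False
  then have pos: "0 < measure Q A" by (simp add: zero_less_measure_iff)
  define x0 where "x0 = (\<integral>x. indicator A x * r x \<partial>Q) / measure Q A"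
  have "(\<integral>x. indicator A x * r x \<partial>Q) = measure Q A * x0" using pos by (simp add: x0_def)
  then obtain y0 where "f x0 = ereal y0" "measure Q A * y0 \<le> (\<integral>x. indicator A x * G x \<partial>Q)"
    using jensen_set_integral[OF f Q r fin _ A pos] G unfolding G_def by blast
  then show ?thesis using pos by (simp add: persp_def x0_def[symmetric])
qed

section \<open>Data processing for a two-set partition\<close>

lemma RN_deriv_measure_eq_set_integral:
  fixes P Q :: "'a measure"
  defines "r \<equiv> \<lambda>x. enn2real (RN_deriv Q P x)"
  assumes Q: "finite_measure Q" and P: "finite_measure P"
    and sets: "sets P = sets Q" and ac: "absolutely_continuous Q P"
  shows "integrable Q r" and "B \<in> sets Q \<Longrightarrow> measure P B = (\<integral>x. indicator B x * r x \<partial>Q)"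
proof -
  interpret Q: finite_measure Q by fact
  interpret P: finite_measure P by fact
  have "AE x in Q. RN_deriv Q P x \<noteq> \<infinity>"
    by (rule Q.RN_deriv_finite[OF _ ac sets]) unfold_locales
  then have r_eq: "AE x in Q. RN_deriv Q P x = ennreal (r x)"
    by eventually_elim (simp add: r_def less_top)
  have emP: "emeasure P B = (\<integral>\<^sup>+x. ennreal (indicator B x * r x) \<partial>Q)" if B: "B \<in> sets Q" for B
  proof -
    have "emeasure P B = emeasure (density Q (RN_deriv Q P)) B"
      using Q.density_RN_deriv[OF ac sets] by simp
    also have "\<dots> = (\<integral>\<^sup>+x. RN_deriv Q P x * indicator B x \<partial>Q)"
      using B by (simp add: emeasure_density)
    also have "\<dots> = (\<integral>\<^sup>+x. ennreal (indicator B x * r x) \<partial>Q)"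
      using r_eq by (intro nn_integral_cong_AE) (auto elim!: eventually_mono simp: indicator_def)
    finally show ?thesis .
  qed
  show int: "integrable Q r"
  proof (rule integrableI_nonneg)
    have "(\<integral>\<^sup>+x. ennreal (r x) \<partial>Q) = emeasure P (space Q)"
      unfolding emP[OF sets.top] by (intro nn_integral_cong) (simp add: indicator_def)
    then show "(\<integral>\<^sup>+x. ennreal (r x) \<partial>Q) < \<infinity>"
      by (simp add: less_top[symmetric])
  qed (auto simp: r_def)
  show "measure P B = (\<integral>x. indicator B x * r x \<partial>Q)" if B: "B \<in> sets Q"
  proof -
    have "integrable Q (\<lambda>x. indicator B x * r x)"
      using integrable_mult_indicator[OF B int] by simp
    then have "emeasure P B = ennreal (\<integral>x. indicator B x * r x \<partial>Q)"
      unfolding emP[OF B] by (intro nn_integral_eq_integral) (auto simp: r_def)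
    then show ?thesis
      by (simp add: measure_def integral_nonneg_AE r_def)
  qed
qed

lemma integrable_neg_part_of_affine_minorant:
  fixes r G :: "'a \<Rightarrow> real"
  assumes Q: "finite_measure Q" and r: "integrable Q r" "\<And>x. 0 \<le> r x"
    and G: "G \<in> borel_measurable Q" and minorant: "AE x in Q. c + k * r x \<le> G x"
  shows "integrable Q (\<lambda>x. max 0 (- G x))"
proof (rule Bochner_Integration.integrable_bound[where f="\<lambda>x. \<bar>c\<bar> + \<bar>k\<bar> * r x"])
  interpret finite_measure Q by fact
  show "integrable Q (\<lambda>x. \<bar>c\<bar> + \<bar>k\<bar> * r x)"
    using r by (intro Bochner_Integration.integrable_add integrable_mult_right) auto
  show "AE x in Q. norm (max 0 (- G x)) \<le> norm (\<bar>c\<bar> + \<bar>k\<bar> * r x)"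
    using minorant
  proof eventually_elim
    case (elim x)
    then have "- G x \<le> \<bar>c\<bar> + \<bar>k\<bar> * r x"
      using r(2)[of x] abs_ge_self[of c] abs_ge_minus_self[of k]
        mult_right_mono[of "- k" "\<bar>k\<bar>" "r x"] by linarith
    then show ?case using r(2)[of x] by simp
  qed
qed (use G in measurable)

lemma nn_integral_pos_part_eq:
  fixes F :: "'a \<Rightarrow> ereal" and G :: "'a \<Rightarrow> real"
  assumes "AE x in Q. F x = ereal (G x)"
  shows "(\<integral>\<^sup>+x. e2ennreal (max 0 (F x)) \<partial>Q) = (\<integral>\<^sup>+x. ennreal (max 0 (G x)) \<partial>Q)"
  using assms by (intro nn_integral_cong_AE) (auto elim!: eventually_mono simp: max_def zero_ereal_def)

lemma integral_eq_pos_part_minus_neg_part: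
  fixes F :: "'a \<Rightarrow> ereal" and G :: "'a \<Rightarrow> real"
  assumes FG: "AE x in Q. F x = ereal (G x)"
    and pos: "integrable Q (\<lambda>x. max 0 (G x))" and neg: "integrable Q (\<lambda>x. max 0 (- G x))"
  shows "integrable Q G"
    and "enn2ereal (\<integral>\<^sup>+x. e2ennreal (max 0 (F x)) \<partial>Q) - enn2ereal (\<integral>\<^sup>+x. e2ennreal (max 0 (- F x)) \<partial>Q)
      = ereal (\<integral>x. G x \<partial>Q)"
proof -
  have G_split: "G = (\<lambda>x. max 0 (G x) - max 0 (- G x))" by (auto simp: max_def)
  show "integrable Q G"
    by (subst G_split) (intro Bochner_Integration.integrable_diff pos neg)
  have FG': "AE x in Q. - F x = ereal (- G x)" using FG by eventually_elim simp
  have "(\<integral>\<^sup>+x. e2ennreal (max 0 (- F x)) \<partial>Q) = ennreal (\<integral>x. max 0 (- G x) \<partial>Q)"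
    unfolding nn_integral_pos_part_eq[OF FG'] by (rule nn_integral_eq_integral[OF neg]) simp
  moreover have "(\<integral>\<^sup>+x. e2ennreal (max 0 (F x)) \<partial>Q) = ennreal (\<integral>x. max 0 (G x) \<partial>Q)"
    unfolding nn_integral_pos_part_eq[OF FG] by (rule nn_integral_eq_integral[OF pos]) simp
  moreover have "(\<integral>x. G x \<partial>Q) = (\<integral>x. max 0 (G x) \<partial>Q) - (\<integral>x. max 0 (- G x) \<partial>Q)"
    by (subst G_split) (rule Bochner_Integration.integral_diff[OF pos neg])
  ultimately show "enn2ereal (\<integral>\<^sup>+x. e2ennreal (max 0 (F x)) \<partial>Q)
      - enn2ereal (\<integral>\<^sup>+x. e2ennreal (max 0 (- F x)) \<partial>Q) = ereal (\<integral>x. G x \<partial>Q)"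
    by (simp add: integral_nonneg_AE)
qed

lemma fdiv_eq_integral:
  fixes f :: "real \<Rightarrow> ereal" and P Q :: "'a measure"
  defines "r \<equiv> \<lambda>x. enn2real (RN_deriv Q P x)"
    and "G \<equiv> \<lambda>x. real_of_ereal (f (enn2real (RN_deriv Q P x)))"
  assumes f: "closed_convex_fdiv_fun f" and Q: "finite_measure Q" and P: "finite_measure P"
    and sets: "sets P = sets Q" and ac: "absolutely_continuous Q P" and fdiv_fin: "fdiv f P Q < \<infinity>"
  shows "AE x in Q. f (r x) \<noteq> \<infinity>" and "integrable Q G" and "fdiv f P Q = ereal (\<integral>x. G x \<partial>Q)"
proof -
  interpret finite_measure Q by fact
  have G_r: "G = (\<lambda>x. real_of_ereal (f (r x)))" by (simp add: G_def r_def)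
  have r: "integrable Q r"
    unfolding r_def by (rule RN_deriv_measure_eq_set_integral(1)[OF Q P sets ac])
  note fdiv_fun_borel_measurable[OF f, measurable]
  have G_meas [measurable]: "G \<in> borel_measurable Q"
    unfolding G_def by measurable
  define Pos where "Pos = (\<integral>\<^sup>+x. e2ennreal (max 0 (f (r x))) \<partial>Q)"
  define Neg where "Neg = (\<integral>\<^sup>+x. e2ennreal (max 0 (- f (r x))) \<partial>Q)"
  have fdiv: "fdiv f P Q = enn2ereal Pos - enn2ereal Neg"
    by (simp add: fdiv_def Pos_def Neg_def r_def)
  have "Pos \<noteq> \<infinity>"
    using fdiv_fin unfolding fdiv by (cases "enn2ereal Neg") auto
  then have "AE x in Q. e2ennreal (max 0 (f (r x))) \<noteq> \<infinity>"
    unfolding Pos_def by (intro nn_integral_noteq_infinite) (simp_all add: r_def)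
  then show fin: "AE x in Q. f (r x) \<noteq> \<infinity>"
    by eventually_elim auto
  have fG: "AE x in Q. f (r x) = ereal (G x)"
    using fin by eventually_elim (use fdiv_fun_finite_iff[OF f] in \<open>auto simp: G_r\<close>)
  have pos: "integrable Q (\<lambda>x. max 0 (G x))"
    using \<open>Pos \<noteq> \<infinity>\<close> unfolding Pos_def nn_integral_pos_part_eq[OF fG]
    by (intro integrableI_nonneg) (auto simp: less_top)
  obtain c k where line: "\<And>t. ereal (c + k * t) \<le> f t"
    using fdiv_fun_affine_minorant[OF f] by blast
  have "AE x in Q. c + k * r x \<le> G x"
    using fG
  proof eventually_elim
    case (elim x)
    then show ?case using line[of "r x"] by simp
  qed
  then have neg: "integrable Q (\<lambda>x. max 0 (- G x))"
    by (intro integrable_neg_part_of_affine_minorant[OF Q r _ G_meas]) (auto simp: r_def)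
  show "integrable Q G" and "fdiv f P Q = ereal (\<integral>x. G x \<partial>Q)"
    using integral_eq_pos_part_minus_neg_part[OF fG pos neg] unfolding fdiv Pos_def Neg_def by auto
qed

lemma persp_add_persp_le_fdiv:
  fixes f :: "real \<Rightarrow> ereal" and P Q :: "'a measure"
  assumes f: "closed_convex_fdiv_fun f" and Q: "prob_space Q" and P: "prob_space P"
    and sets: "sets P = sets Q" and ac: "absolutely_continuous Q P" and A: "A \<in> sets Q"
  shows "persp f (measure Q A) (measure P A) + persp f (1 - measure Q A) (1 - measure P A) \<le> fdiv f P Q"
proof (cases "fdiv f P Q < \<infinity>")
  case False
  then show ?thesis by (simp add: not_less top_ereal_def)
next
  case True
  interpret Q: prob_space Q by fact
  interpret P: prob_space P by fact
  define r where "r = (\<lambda>x. enn2real (RN_deriv Q P x))"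
  define G where "G = (\<lambda>x. real_of_ereal (f (r x)))"
  note RN = RN_deriv_measure_eq_set_integral[OF Q.finite_measure_axioms P.finite_measure_axioms sets ac]
  note fdiv = fdiv_eq_integral[OF f Q.finite_measure_axioms P.finite_measure_axioms sets ac True]
  have r: "integrable Q r" and fin: "AE x in Q. f (r x) \<noteq> \<infinity>" and G: "integrable Q G"
    and fdiv_eq: "fdiv f P Q = ereal (\<integral>x. G x \<partial>Q)"
    using RN(1) fdiv by (simp_all add: r_def G_def)
  have jensen: "persp f (measure Q B) (measure P B) \<le> ereal (\<integral>x. indicator B x * G x \<partial>Q)"
    if B: "B \<in> sets Q" for B
    using persp_le_set_integral[OF f Q.finite_measure_axioms r fin _ B] G RN(2)[OF B]
    by (simp add: G_def r_def)
  define Ac where "Ac = space Q - A"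
  have Ac: "Ac \<in> sets Q" using A by (auto simp: Ac_def)
  have "measure Q Ac = 1 - measure Q A" "measure P Ac = 1 - measure P A"
    using A Q.prob_compl P.prob_compl sets_eq_imp_space_eq[OF sets] sets by (simp_all add: Ac_def)
  then have "persp f (1 - measure Q A) (1 - measure P A) \<le> ereal (\<integral>x. indicator Ac x * G x \<partial>Q)"
    using jensen[OF Ac] by simp
  from add_mono[OF jensen[OF A] this]
  have "persp f (measure Q A) (measure P A) + persp f (1 - measure Q A) (1 - measure P A)
      \<le> ereal (\<integral>x. indicator A x * G x \<partial>Q) + ereal (\<integral>x. indicator Ac x * G x \<partial>Q)" .
  also have "\<dots> = ereal (\<integral>x. indicator A x * G x + indicator Ac x * G x \<partial>Q)"
    using integrable_mult_indicator[OF A G] integrable_mult_indicator[OF Ac G] by simp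
  also have "\<dots> = fdiv f P Q"
    unfolding fdiv_eq by (intro arg_cong[where f=ereal] Bochner_Integration.integral_cong)
      (auto simp: Ac_def indicator_def)
  finally show ?thesis .
qed

lemma persp_self: "closed_convex_fdiv_fun f \<Longrightarrow> persp f x x = 0"
  by (simp add: persp_def fdiv_fun_one)

lemma g_fr_le:
  assumes "z \<in> {0..1}" "persp f \<beta> z + persp f (1 - \<beta>) (1 - z) \<le> ereal \<rho>"
  shows "g_fr f \<rho> \<beta> \<le> z"
  unfolding g_fr_def by (rule cInf_lower) (use assms in \<open>auto intro: bdd_belowI[of _ 0]\<close>)

lemma g_fr_bounds:
  assumes f: "closed_convex_fdiv_fun f" and "0 \<le> \<rho>" "\<beta> \<in> {0..1}"
  shows "0 \<le> g_fr f \<rho> \<beta>" and "g_fr f \<rho> \<beta> \<le> \<beta>"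
proof -
  have "\<beta> \<in> {z \<in> {0..1}. persp f \<beta> z + persp f (1 - \<beta>) (1 - z) \<le> ereal \<rho>}"
    using assms by (simp add: persp_self[OF f])
  then show "0 \<le> g_fr f \<rho> \<beta>"
    unfolding g_fr_def by (intro cInf_greatest) auto
  show "g_fr f \<rho> \<beta> \<le> \<beta>"
    using assms by (intro g_fr_le) (simp_all add: persp_self[OF f])
qed

lemma le_g_fr_inv:
  assumes "\<beta> \<in> {0..1}" "g_fr f \<rho> \<beta> \<le> \<tau>"
  shows "\<beta> \<le> g_fr_inv f \<rho> \<tau>"
  unfolding g_fr_inv_def by (rule cSup_upper) (use assms in \<open>auto intro: bdd_aboveI[of _ 1]\<close>)

lemma g_fr_inv_bounds:
  assumes f: "closed_convex_fdiv_fun f" and "0 \<le> \<rho>" "0 \<le> \<tau>"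
  shows "0 \<le> g_fr_inv f \<rho> \<tau>" and "g_fr_inv f \<rho> \<tau> \<le> 1"
proof -
  have "g_fr f \<rho> 0 \<le> \<tau>" using g_fr_bounds[OF f, of \<rho> 0] assms by simp
  then show "0 \<le> g_fr_inv f \<rho> \<tau>" by (intro le_g_fr_inv) auto
  show "g_fr_inv f \<rho> \<tau> \<le> 1"
    unfolding g_fr_inv_def using \<open>g_fr f \<rho> 0 \<le> \<tau>\<close> by (intro cSup_least) (auto intro!: exI[of _ 0])
qed

lemma g_fr_inv_g_fr:
  assumes f: "closed_convex_fdiv_fun f" and \<rho>: "0 \<le> \<rho>" and \<beta>: "\<beta> \<in> {0..1}"
  shows "\<beta> \<le> g_fr_inv f \<rho> (g_fr f \<rho> \<beta>)" and "g_fr_inv f \<rho> (g_fr f \<rho> \<beta>) \<le> 1"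
  using le_g_fr_inv[OF \<beta> order_refl] g_fr_inv_bounds(2)[OF f \<rho> g_fr_bounds(1)[OF f \<rho> \<beta>]] by auto

section \<open>Empirical distribution functions and their quantiles\<close>

definition emp_cdf_left :: "(nat \<Rightarrow> real) \<Rightarrow> nat \<Rightarrow> real \<Rightarrow> real" where
  "emp_cdf_left vs k x = (\<Sum>j<k. indicator {..<x} (vs j)) / real k"

lemma emp_cdf_le_emp_cdf_left: "q < v \<Longrightarrow> emp_cdf w k q \<le> emp_cdf_left w k v"
  unfolding emp_cdf_def emp_cdf_left_def
  by (intro divide_right_mono sum_mono) (auto simp: indicator_def)

lemma emp_cdf_left_mono: "v \<le> v' \<Longrightarrow> emp_cdf_left w k v \<le> emp_cdf_left w k v'"
  unfolding emp_cdf_left_def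
  by (intro divide_right_mono sum_mono) (auto simp: indicator_def)

lemma emp_cdf_eq_emp_cdf_left:
  "(\<And>j. j < k \<Longrightarrow> w j \<le> q \<longleftrightarrow> w j < v) \<Longrightarrow> emp_cdf w k q = emp_cdf_left w k v"
  unfolding emp_cdf_def emp_cdf_left_def by (intro arg_cong2[where f="(/)"] sum.cong) (simp_all add: indicator_def)

lemma emp_cdf_eq_one: "0 < k \<Longrightarrow> (\<And>j. j < k \<Longrightarrow> w j \<le> q) \<Longrightarrow> emp_cdf w k q = 1"
  unfolding emp_cdf_def by simp

lemma emp_cdf_eq_zero: "(\<And>j. j < k \<Longrightarrow> q < w j) \<Longrightarrow> emp_cdf w k q = 0"
  unfolding emp_cdf_def by (simp add: indicator_def not_le[symmetric])

lemma emp_cdf_left_borel_measurable [measurable]: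
  assumes "\<And>j. j < k \<Longrightarrow> (\<lambda>\<omega>. W j \<omega>) \<in> borel_measurable M" "V \<in> borel_measurable M"
  shows "(\<lambda>\<omega>. emp_cdf_left (\<lambda>j. W j \<omega>) k (V \<omega>)) \<in> borel_measurable M"
  unfolding emp_cdf_left_def
proof (intro borel_measurable_divide borel_measurable_sum)
  fix j assume "j \<in> {..<k}"
  then have [measurable]: "W j \<in> borel_measurable M" using assms(1) by simp
  note assms(2)[measurable]
  have "(\<lambda>\<omega>. indicator {..<V \<omega>} (W j \<omega>) :: real) = (\<lambda>\<omega>. if W j \<omega> < V \<omega> then 1 else 0)"
    by (auto simp: indicator_def)
  then show "(\<lambda>\<omega>. indicator {..<V \<omega>} (W j \<omega>) :: real) \<in> borel_measurable M"
    by simp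
qed simp

lemma exists_separating_point:
  fixes T :: "real set"
  assumes "finite T"
  obtains q where "q < v" "\<And>x. x \<in> T \<Longrightarrow> x \<le> q \<longleftrightarrow> x < v"
proof
  let ?q = "Max (insert (v - 1) {x \<in> T. x < v})"
  show q: "?q < v" using assms by simp
  show "x \<le> ?q \<longleftrightarrow> x < v" if "x \<in> T" for x
  proof
    assume "x \<le> ?q" then show "x < v" using q by linarith
  next
    assume "x < v" then show "x \<le> ?q" using assms that by (intro Max_ge) auto
  qed
qed

lemma le_quantile_iff:
  assumes "{q. c \<le> F q} \<noteq> {}" "bdd_below {q. c \<le> F q}"
  shows "v \<le> quantile c F \<longleftrightarrow> (\<forall>q<v. F q < c)"
  unfolding quantile_def le_cInf_iff[OF assms] by (auto simp: not_le[symmetric])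

lemma le_quantile_Min_emp_cdf_iff:
  fixes w :: "nat \<Rightarrow> nat \<Rightarrow> real" and m :: "nat \<Rightarrow> nat"
  assumes d: "0 < d" and m: "\<And>i. i < d \<Longrightarrow> 0 < m i" and c: "0 < c" "c \<le> 1"
  shows "v \<le> quantile c (\<lambda>x. Min ((\<lambda>i. emp_cdf (w i) (m i) x) ` {..<d}))
     \<longleftrightarrow> (\<exists>i<d. emp_cdf_left (w i) (m i) v < c)"
proof -
  define F where "F x = Min ((\<lambda>i. emp_cdf (w i) (m i) x) ` {..<d})" for x
  have F_ge: "c \<le> F q \<longleftrightarrow> (\<forall>i<d. c \<le> emp_cdf (w i) (m i) q)" for q
    unfolding F_def using d by (subst Min_ge_iff) auto
  define T where "T = (\<lambda>(i, j). w i j) ` (SIGMA i:{..<d}. {..<m i})"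
  have T: "finite T" "\<And>i j. i < d \<Longrightarrow> j < m i \<Longrightarrow> w i j \<in> T"
    unfolding T_def by force+
  have "Max T \<in> {q. c \<le> F q}"
    using c m T by (auto simp: F_ge emp_cdf_eq_one intro: Max_ge)
  moreover have "bdd_below {q. c \<le> F q}"
  proof (rule bdd_belowI)
    fix q assume "q \<in> {q. c \<le> F q}"
    then have "0 < emp_cdf (w 0) (m 0) q" using c d F_ge by fastforce
    then obtain j where "j < m 0" "w 0 j \<le> q" using emp_cdf_eq_zero by (metis less_irrefl not_le)
    then show "Min T \<le> q" using T d by (meson Min_le order_trans)
  qed
  ultimately have "v \<le> quantile c F \<longleftrightarrow> (\<forall>q<v. F q < c)"
    by (intro le_quantile_iff) auto
  also have "\<dots> \<longleftrightarrow> (\<exists>i<d. emp_cdf_left (w i) (m i) v < c)"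
  proof
    assume below: "\<forall>q<v. F q < c"
    obtain q where "q < v" and sep: "\<And>x. x \<in> T \<Longrightarrow> x \<le> q \<longleftrightarrow> x < v"
      using exists_separating_point[OF T(1)] by blast
    then obtain i where "i < d" "emp_cdf (w i) (m i) q < c"
      using below F_ge by (meson not_le)
    then show "\<exists>i<d. emp_cdf_left (w i) (m i) v < c"
      using emp_cdf_eq_emp_cdf_left[of "m i" "w i" q v] sep T(2) by auto
  next
    assume "\<exists>i<d. emp_cdf_left (w i) (m i) v < c"
    then show "\<forall>q<v. F q < c"
      using F_ge emp_cdf_le_emp_cdf_left by (meson not_le order_trans)
  qed
  finally show ?thesis unfolding F_def .
qed

section \<open>Score distributions in the \<open>f\<close>-divergence ball\<close>

lemma real_distribution_quantile_point:
  assumes "real_distribution \<mu>" and L: "0 < L" "L < 1"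
  obtains a where "L \<le> measure \<mu> {..a}" "measure \<mu> {..<a} \<le> L"
proof -
  interpret real_distribution \<mu> by fact
  define A where "A = {x. L \<le> cdf \<mu> x}"
  have "\<forall>\<^sub>F x in at_top. L < cdf \<mu> x"
    by (rule order_tendstoD(1)[OF cdf_lim_at_top_prob L(2)])
  then have A_ne: "A \<noteq> {}"
    unfolding A_def by (metis (mono_tags) eventually_at_top_linorder order_refl less_imp_le empty_iff mem_Collect_eq)
  have "\<forall>\<^sub>F x in at_bot. cdf \<mu> x < L"
    by (rule order_tendstoD(2)[OF cdf_lim_at_bot L(1)])
  then obtain N where N: "\<And>x. x \<le> N \<Longrightarrow> cdf \<mu> x < L"
    by (auto simp: eventually_at_bot_linorder)
  have A_bdd: "bdd_below A"
  proof (rule bdd_belowI)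
    fix x assume "x \<in> A"
    then show "N \<le> x" using N[of x] by (force simp: A_def)
  qed
  define a where "a = Inf A"
  have below: "cdf \<mu> x < L" if "x < a" for x
    using cInf_lower[OF _ A_bdd, of x] that by (force simp: a_def A_def)
  have "L \<le> cdf \<mu> a"
  proof (rule tendsto_lowerbound)
    show "(cdf \<mu> \<longlongrightarrow> cdf \<mu> a) (at_right a)"
      using cdf_is_right_cont[of a] by (simp add: continuous_within)
    show "\<forall>\<^sub>F y in at_right a. L \<le> cdf \<mu> y"
      using eventually_at_right_less[of a]
    proof eventually_elim
      case (elim y)
      then obtain x where "x \<in> A" "x < y" using cInf_less_iff[OF A_ne A_bdd] by (auto simp: a_def)
      then show ?case unfolding A_def using cdf_nondecreasing[of x y] by simp
    qed
  qed simp
  moreover have "measure \<mu> {..<a} \<le> L"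
  proof (rule tendsto_upperbound[OF cdf_at_left])
    show "\<forall>\<^sub>F x in at_left a. cdf \<mu> x \<le> L"
      using eventually_at_left_real[of "a - 1" a]
      by (simp add: eventually_mono below less_imp_le)
  qed simp
  ultimately show ?thesis by (intro that) (simp_all add: cdf_def)
qed

lemma mixture_prob_space:
  assumes "S0 \<in> mixtures \<mu> d" "\<And>i. i < d \<Longrightarrow> real_distribution (\<mu> i)"
  shows "prob_space S0"
proof -
  obtain lam where sets: "sets S0 = sets borel" and lam: "\<forall>i<d. 0 \<le> lam i" "(\<Sum>i<d. lam i) = 1"
    and S0: "\<forall>A\<in>sets borel. emeasure S0 A = (\<Sum>i<d. ennreal (lam i) * emeasure (\<mu> i) A)"
    using assms(1) unfolding mixtures_def by blast
  have "emeasure S0 (space S0) = (\<Sum>i<d. ennreal (lam i) * emeasure (\<mu> i) UNIV)"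
    using S0 sets_eq_imp_space_eq[OF sets] by simp
  also have "\<dots> = (\<Sum>i<d. ennreal (lam i))"
  proof (intro sum.cong refl)
    fix i assume "i \<in> {..<d}"
    then interpret real_distribution "\<mu> i" using assms(2) by simp
    show "ennreal (lam i) * emeasure (\<mu> i) UNIV = ennreal (lam i)"
      using emeasure_space_1 by simp
  qed
  also have "\<dots> = 1" using lam by (subst sum_ennreal) auto
  finally show ?thesis by (rule prob_spaceI)
qed

lemma mixture_measure_ge:
  assumes S0: "S0 \<in> mixtures \<mu> d" and \<mu>: "\<And>i. i < d \<Longrightarrow> real_distribution (\<mu> i)"
    and A: "A \<in> sets borel" and L: "0 \<le> L" "\<And>i. i < d \<Longrightarrow> L \<le> measure (\<mu> i) A"
  shows "L \<le> measure S0 A"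
proof -
  interpret S0: prob_space S0 using mixture_prob_space[OF S0 \<mu>] .
  obtain lam where lam: "\<forall>i<d. 0 \<le> lam i" "(\<Sum>i<d. lam i) = 1"
    and S0_eq: "\<forall>A\<in>sets borel. emeasure S0 A = (\<Sum>i<d. ennreal (lam i) * emeasure (\<mu> i) A)"
    using S0 unfolding mixtures_def by blast
  have "ennreal L = ennreal (\<Sum>i<d. lam i * L)"
    using lam by (simp add: sum_distrib_right[symmetric])
  also have "\<dots> = (\<Sum>i<d. ennreal (lam i) * ennreal L)"
    using lam L by (subst sum_ennreal[symmetric]) (auto simp: ennreal_mult)
  also have "\<dots> \<le> (\<Sum>i<d. ennreal (lam i) * emeasure (\<mu> i) A)"
    using L \<mu> by (intro sum_mono mult_left_mono)
      (auto simp: finite_measure.emeasure_eq_measure real_distribution_def prob_space_def)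
  also have "\<dots> = emeasure S0 A" using S0_eq A by simp
  finally show ?thesis using L by (simp add: S0.emeasure_eq_measure)
qed

lemma fdiv_ball_threshold:
  fixes f :: "real \<Rightarrow> ereal" and P :: "real measure" and \<mu> :: "nat \<Rightarrow> real measure"
  assumes f: "closed_convex_fdiv_fun f" and \<rho>: "0 \<le> \<rho>" and \<tau>: "0 \<le> \<tau>"
    and P: "prob_space P" "sets P = sets borel"
    and S0: "S0 \<in> mixtures \<mu> d" "absolutely_continuous S0 P" "fdiv f P S0 \<le> ereal \<rho>"
    and \<mu>: "\<And>i. i < d \<Longrightarrow> real_distribution (\<mu> i)" and d: "0 < d"
    and L: "g_fr_inv f \<rho> \<tau> < L" "L < 1"
  obtains i a where "i < d" "measure (\<mu> i) {..<a} \<le> L" "\<tau> \<le> measure P {..a}"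
proof -
  interpret S0: prob_space S0 using mixture_prob_space[OF S0(1) \<mu>] .
  interpret P: prob_space P by fact
  have L0: "0 < L" using g_fr_inv_bounds(1)[OF f \<rho> \<tau>] L by linarith
  have "\<forall>i. \<exists>a. i < d \<longrightarrow> L \<le> measure (\<mu> i) {..a} \<and> measure (\<mu> i) {..<a} \<le> L"
    using real_distribution_quantile_point[OF \<mu> L0 L(2)] by metis
  then obtain A where A: "\<And>i. i < d \<Longrightarrow> L \<le> measure (\<mu> i) {..A i} \<and> measure (\<mu> i) {..<A i} \<le> L"
    by metis
  \<comment> \<open>every \<open>\<mu> i\<close>, hence the mixture \<open>S0\<close>, gives \<open>{..a}\<close> mass at least \<open>L\<close>\<close>
  define a where "a = Max (A ` {..<d})"
  have "a \<in> A ` {..<d}" unfolding a_def using d by (intro Max_in) auto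
  then obtain i where i: "i < d" "a = A i" by auto
  define \<beta> where "\<beta> = measure S0 {..a}"
  have "L \<le> \<beta>"
    unfolding \<beta>_def
  proof (rule mixture_measure_ge[OF S0(1) \<mu>])
    fix i' assume "i' < d"
    then interpret real_distribution "\<mu> i'" using \<mu> by simp
    have "A i' \<le> a" unfolding a_def using \<open>i' < d\<close> by (intro Max_ge) auto
    then show "L \<le> measure (\<mu> i') {..a}"
      using A[OF \<open>i' < d\<close>] finite_measure_mono[of "{..A i'}" "{..a}"] by auto
  qed (use L0 in auto)
  have "persp f \<beta> (measure P {..a}) + persp f (1 - \<beta>) (1 - measure P {..a}) \<le> ereal \<rho>"
    using persp_add_persp_le_fdiv[OF f S0.prob_space_axioms P(1) _ S0(2), of "{..a}"] S0(3)
      P(2) mixtures_def S0(1) by (auto simp: \<beta>_def)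
  then have "g_fr f \<rho> \<beta> \<le> measure P {..a}"
    by (intro g_fr_le) auto
  moreover have "\<tau> < g_fr f \<rho> \<beta>"
  proof (rule ccontr)
    assume "\<not> \<tau> < g_fr f \<rho> \<beta>"
    then have "\<beta> \<le> g_fr_inv f \<rho> \<tau>" by (intro le_g_fr_inv) (auto simp: \<beta>_def)
    then show False using \<open>L \<le> \<beta>\<close> L by simp
  qed
  ultimately show ?thesis using A i by (intro that[of i a]) auto
qed

section \<open>Concentration of the empirical distribution function\<close>

lemma exp_shifted_le_two:
  fixes n \<epsilon> \<delta> :: real
  assumes "0 \<le> n" "0 \<le> \<delta>" "\<delta> \<le> \<epsilon>" "8 * n * \<epsilon> * \<delta> \<le> 1"
  shows "exp (- 2 * n * (\<epsilon> - \<delta>)\<^sup>2) \<le> 2 * exp (- 2 * n * \<epsilon>\<^sup>2)"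
proof -
  have "2 * n * (\<epsilon>\<^sup>2 - (\<epsilon> - \<delta>)\<^sup>2) = 2 * n * \<delta> * (2 * \<epsilon> - \<delta>)"
    by (simp add: power2_eq_square algebra_simps)
  also have "\<dots> \<le> 2 * n * \<delta> * (2 * \<epsilon>)"
    using assms by (intro mult_left_mono) auto
  also have "\<dots> \<le> 1 / 2" using assms(4) by (simp add: ac_simps)
  finally have "exp (2 * n * (\<epsilon>\<^sup>2 - (\<epsilon> - \<delta>)\<^sup>2)) \<le> 2"
    using exp_half_le2 by (meson exp_le_cancel_iff order_trans)
  then have "exp (- 2 * n * \<epsilon>\<^sup>2) * exp (2 * n * (\<epsilon>\<^sup>2 - (\<epsilon> - \<delta>)\<^sup>2)) \<le> exp (- 2 * n * \<epsilon>\<^sup>2) * 2"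
    by (intro mult_left_mono) auto
  then show ?thesis
    by (simp add: exp_add[symmetric] algebra_simps)
qed

lemma prob_emp_cdf_left_less:
  fixes W :: "nat \<Rightarrow> 'a \<Rightarrow> real" and \<mu> :: "real measure"
  assumes M: "prob_space M" and k: "0 < k" and indep: "prob_space.indep_vars M (\<lambda>_. borel) W {..<k}"
    and distr: "\<And>j. j < k \<Longrightarrow> distr M borel (W j) = \<mu>" and e: "0 \<le> e"
  shows "1 - exp (- 2 * real k * e\<^sup>2)
    \<le> measure M {\<omega> \<in> space M. emp_cdf_left (\<lambda>j. W j \<omega>) k a < measure \<mu> {..<a} + e}"
proof -
  interpret M: prob_space M by fact
  define Z where "Z = (\<lambda>j \<omega>. indicator {..<a} (W j \<omega>) :: real)"
  have W [measurable]: "W j \<in> borel_measurable M" if "j < k" for j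
    using indep that unfolding M.indep_vars_def by simp
  have Z_distr: "distr M borel (Z j) = distr \<mu> borel (indicator {..<a})" if "j < k" for j
    using distr_distr[of "indicator {..<a} :: real \<Rightarrow> real" borel borel "W j" M, symmetric] that distr
    by (simp add: Z_def comp_def)
  interpret H: Hoeffding_ineq_iid M "{..<k}" Z "Z 0" 0 1 "M.expectation (Z 0)"
  proof unfold_locales
    show "M.indep_vars (\<lambda>_. borel) Z {..<k}"
      unfolding Z_def by (rule M.indep_vars_compose2[OF indep]) simp
  qed (use k Z_distr in \<open>auto simp: Z_def\<close>)
  have "M.expectation (Z 0) = (\<integral>x. indicator {..<a} x \<partial>distr M borel (W 0))"
    using k by (subst integral_distr) (simp_all add: Z_def)
  also have "\<dots> = measure (distr M borel (W 0)) {..<a}"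
    using k M.prob_space_distr[OF W[of 0]] by (simp add: prob_space.finite_measure)
  also have "\<dots> = measure \<mu> {..<a}"
    using k distr by simp
  finally have EZ: "M.expectation (Z 0) = measure \<mu> {..<a}" .
  have emp: "emp_cdf_left (\<lambda>j. W j \<omega>) k a = (\<Sum>j\<in>{..<k}. Z j \<omega>) / real (card {..<k})" for \<omega>
    by (simp add: emp_cdf_left_def Z_def)
  have "M.prob {\<omega> \<in> space M. (\<Sum>j\<in>{..<k}. Z j \<omega>) / real (card {..<k}) \<ge> M.expectation (Z 0) + e}
      \<le> exp (- 2 * real (card {..<k}) * e\<^sup>2 / (1 - 0)\<^sup>2)"
    using k e by (intro H.Hoeffding_ineq_ge') auto
  then show ?thesis
    unfolding emp EZ not_le[symmetric]
    by (subst M.prob_neg) (use H.random_variable in auto)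
qed

lemma prob_emp_cdf_left_less_slack:
  fixes W :: "nat \<Rightarrow> 'a \<Rightarrow> real" and \<mu> :: "real measure"
  assumes M: "prob_space M" and k: "0 < k" and indep: "prob_space.indep_vars M (\<lambda>_. borel) W {..<k}"
    and distr: "\<And>j. j < k \<Longrightarrow> distr M borel (W j) = \<mu>" and \<mu>_a: "measure \<mu> {..<a} \<le> b + \<delta>"
    and \<delta>: "0 \<le> \<delta>" "\<delta> \<le> \<epsilon>" "8 * real k * \<epsilon> * \<delta> \<le> 1"
  shows "1 - 2 * exp (- 2 * real k * \<epsilon>\<^sup>2)
    \<le> measure M {\<omega> \<in> space M. emp_cdf_left (\<lambda>j. W j \<omega>) k a < b + \<epsilon>}"
proof -
  interpret M: prob_space M by fact
  have [measurable]: "W j \<in> borel_measurable M" if "j < k" for j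
    using indep that unfolding M.indep_vars_def by simp
  have "1 - 2 * exp (- 2 * real k * \<epsilon>\<^sup>2) \<le> 1 - exp (- 2 * real k * (\<epsilon> - \<delta>)\<^sup>2)"
    using exp_shifted_le_two[of "real k" \<delta> \<epsilon>] \<delta> by simp
  also have "\<dots> \<le> M.prob {\<omega> \<in> space M. emp_cdf_left (\<lambda>j. W j \<omega>) k a < measure \<mu> {..<a} + (\<epsilon> - \<delta>)}"
    using \<delta> by (intro prob_emp_cdf_left_less[OF M k indep distr]) auto
  also have "\<dots> \<le> M.prob {\<omega> \<in> space M. emp_cdf_left (\<lambda>j. W j \<omega>) k a < b + \<epsilon>}"
    using \<mu>_a by (intro M.finite_measure_mono) auto
  finally show ?thesis .
qed

lemma exists_uniform_slack:
  fixes n :: "nat \<Rightarrow> nat"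
  assumes "0 < \<epsilon>" "finite I"
  obtains \<delta> where "0 < \<delta>" "\<delta> < \<epsilon>" "\<And>i. i \<in> I \<Longrightarrow> 8 * real (n i) * \<epsilon> * \<delta> \<le> 1"
proof
  define K where "K = 1 + (\<Sum>i\<in>I. real (n i))"
  have n_le_K: "real (n i) \<le> K" if "i \<in> I" for i
    unfolding K_def using assms(2) that member_le_sum[of i I "\<lambda>i. real (n i)"] by simp
  have K: "0 < K" unfolding K_def by (simp add: sum_nonneg add_pos_nonneg)
  let ?\<delta> = "min (\<epsilon> / 2) (1 / (8 * \<epsilon> * K))"
  show "0 < ?\<delta>" "?\<delta> < \<epsilon>" using assms K by auto
  show "8 * real (n i) * \<epsilon> * ?\<delta> \<le> 1" if "i \<in> I" for i
  proof -
    have "8 * real (n i) * \<epsilon> * ?\<delta> \<le> 8 * real (n i) * \<epsilon> * (1 / (8 * \<epsilon> * K))"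
      using assms by (intro mult_left_mono) auto
    also have "\<dots> = real (n i) / K" using assms by simp
    also have "\<dots> \<le> 1" using n_le_K[OF that] K by simp
    finally show ?thesis .
  qed
qed

lemma le_event_in_vimage_algebra:
  fixes V :: "'a \<Rightarrow> real"
  shows "{\<omega> \<in> \<Omega>. V \<omega> \<le> a} \<in> sets (vimage_algebra \<Omega> V borel)"
proof -
  have "V -` {..a} \<inter> \<Omega> \<in> sets (vimage_algebra \<Omega> V borel)"
    by (rule in_vimage_algebra) simp
  also have "V -` {..a} \<inter> \<Omega> = {\<omega> \<in> \<Omega>. V \<omega> \<le> a}" by auto
  finally show ?thesis .
qed

lemma emp_cdf_left_event_in_vimage_algebra:
  fixes W :: "nat \<Rightarrow> nat \<Rightarrow> 'a \<Rightarrow> real"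
  assumes "\<And>j. j < k \<Longrightarrow> (i, j) \<in> I"
  shows "{\<omega> \<in> \<Omega>. emp_cdf_left (\<lambda>j. W i j \<omega>) k a < c}
    \<in> sets (vimage_algebra \<Omega> (\<lambda>\<omega>. \<lambda>p\<in>I. W (fst p) (snd p) \<omega>) (\<Pi>\<^sub>M p\<in>I. borel))"
proof -
  let ?B = "{w \<in> space (\<Pi>\<^sub>M p\<in>I. borel). emp_cdf_left (\<lambda>j. w (i, j)) k a < (c :: real)}"
  have "(\<lambda>w. w (i, j)) \<in> borel_measurable (\<Pi>\<^sub>M p\<in>I. borel)" if "j < k" for j
    using measurable_component_singleton[OF assms[OF that], of "\<lambda>_. borel"] by simp
  then have "?B \<in> sets (\<Pi>\<^sub>M p\<in>I. borel)"
    by measurable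
  then have "(\<lambda>\<omega>. \<lambda>p\<in>I. W (fst p) (snd p) \<omega>) -` ?B \<inter> \<Omega>
      \<in> sets (vimage_algebra \<Omega> (\<lambda>\<omega>. \<lambda>p\<in>I. W (fst p) (snd p) \<omega>) (\<Pi>\<^sub>M p\<in>I. borel))"
    by (rule in_vimage_algebra)
  also have "(\<lambda>\<omega>. \<lambda>p\<in>I. W (fst p) (snd p) \<omega>) -` ?B \<inter> \<Omega> = {\<omega> \<in> \<Omega>. emp_cdf_left (\<lambda>j. W i j \<omega>) k a < c}"
    using assms by (auto simp: space_PiM emp_cdf_left_def intro!: sum.cong arg_cong2[where f="(<)"])
  finally show ?thesis .
qed

lemma robust_conformal_coverage:
  fixes M :: "'o measure" and V :: "'o \<Rightarrow> real" and W :: "nat \<Rightarrow> nat \<Rightarrow> 'o \<Rightarrow> real"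
    and \<mu> :: "nat \<Rightarrow> real measure" and d :: nat and m :: "nat \<Rightarrow> nat" and f :: "real \<Rightarrow> ereal"
  defines "I \<equiv> {(i, j). i < d \<and> j < m i}"
  assumes M: "prob_space M" and d: "0 < d" and m: "\<And>i. i < d \<Longrightarrow> 0 < m i"
    and f: "closed_convex_fdiv_fun f" and \<rho>: "0 \<le> \<rho>" and \<tau>: "0 \<le> \<tau>" and \<epsilon>: "0 < \<epsilon>"
    and c: "\<epsilon> + g_fr_inv f \<rho> \<tau> \<le> c" "c \<le> 1"
    and \<mu>: "\<And>i. i < d \<Longrightarrow> real_distribution (\<mu> i)"
    and W_distr: "\<And>i j. i < d \<Longrightarrow> j < m i \<Longrightarrow> distr M borel (W i j) = \<mu> i"
    and W_indep: "\<And>i. i < d \<Longrightarrow> prob_space.indep_vars M (\<lambda>_. borel) (W i) {..<m i}"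
    and V: "V \<in> borel_measurable M"
    and S0: "S0 \<in> mixtures \<mu> d" "absolutely_continuous S0 (distr M borel V)"
      "fdiv f (distr M borel V) S0 \<le> ereal \<rho>"
    and indep: "prob_space.indep_set M (sets (vimage_algebra (space M) V borel))
      (sets (vimage_algebra (space M) (\<lambda>\<omega>. \<lambda>p\<in>I. W (fst p) (snd p) \<omega>) (\<Pi>\<^sub>M p\<in>I. borel)))"
  shows "\<tau> * (1 - 2 * (\<Sum>i<d. exp (- 2 * real (m i) * \<epsilon>\<^sup>2)))
    \<le> measure M {\<omega> \<in> space M. V \<omega> \<le> quantile c (\<lambda>x. Min ((\<lambda>i. emp_cdf (\<lambda>j. W i j \<omega>) (m i) x) ` {..<d}))}"
    (is "_ \<le> measure M ?Cov")
proof -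
  interpret M: prob_space M by fact
  have [measurable]: "W i j \<in> borel_measurable M" if "i < d" "j < m i" for i j
    using W_indep[OF that(1)] that(2) unfolding M.indep_vars_def by simp
  define b where "b = g_fr_inv f \<rho> \<tau>"
  have c_pos: "0 < c" using g_fr_inv_bounds(1)[OF f \<rho> \<tau>] c(1) \<epsilon> by simp
  \<comment> \<open>\<open>\<delta>\<close> lifts the population level strictly above \<open>b\<close>; Hoeffding pays for it with the factor 2\<close>
  obtain \<delta> where \<delta>: "0 < \<delta>" "\<delta> < \<epsilon>" "\<And>i. i \<in> {..<d} \<Longrightarrow> 8 * real (m i) * \<epsilon> * \<delta> \<le> 1"
    using exists_uniform_slack[OF \<epsilon> finite_lessThan] by blast
  obtain i a where i: "i < d" and \<mu>_a: "measure (\<mu> i) {..<a} \<le> b + \<delta>"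
    and V_a: "\<tau> \<le> measure (distr M borel V) {..a}"
    by (rule fdiv_ball_threshold[OF f \<rho> \<tau> M.prob_space_distr[OF V] _ S0 \<mu> d, of "b + \<delta>"])
      (use c \<delta> in \<open>auto simp: b_def\<close>)
  define VA where "VA = {\<omega> \<in> space M. V \<omega> \<le> a}"
  define Good where "Good = {\<omega> \<in> space M. emp_cdf_left (\<lambda>j. W i j \<omega>) (m i) a < b + \<epsilon>}"
  have Cov: "?Cov = {\<omega> \<in> space M. \<exists>i<d. emp_cdf_left (\<lambda>j. W i j \<omega>) (m i) (V \<omega>) < c}"
    using c_pos c(2) by (simp add: le_quantile_Min_emp_cdf_iff[OF d m])
  have "1 - 2 * (\<Sum>i<d. exp (- 2 * real (m i) * \<epsilon>\<^sup>2)) \<le> 1 - 2 * exp (- 2 * real (m i) * \<epsilon>\<^sup>2)"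
    using member_le_sum[of i "{..<d}" "\<lambda>i. exp (- 2 * real (m i) * \<epsilon>\<^sup>2)"] i by simp
  also have "\<dots> \<le> M.prob Good"
    unfolding Good_def using i \<delta> \<mu>_a
    by (intro prob_emp_cdf_left_less_slack[OF M m W_indep W_distr]) auto
  finally have "\<tau> * (1 - 2 * (\<Sum>i<d. exp (- 2 * real (m i) * \<epsilon>\<^sup>2))) \<le> \<tau> * M.prob Good"
    using \<tau> by (rule mult_left_mono)
  also have "\<dots> \<le> M.prob VA * M.prob Good"
    using V_a V by (intro mult_right_mono) (auto simp: measure_distr VA_def vimage_def Int_def conj_commute)
  also have "\<dots> = M.prob (VA \<inter> Good)"
  proof (rule M.indep_setD[OF indep, symmetric])
    show "VA \<in> sets (vimage_algebra (space M) V borel)"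
      unfolding VA_def by (rule le_event_in_vimage_algebra)
    show "Good \<in> sets (vimage_algebra (space M) (\<lambda>\<omega>. \<lambda>p\<in>I. W (fst p) (snd p) \<omega>) (\<Pi>\<^sub>M p\<in>I. borel))"
      unfolding Good_def using i by (intro emp_cdf_left_event_in_vimage_algebra) (auto simp: I_def)
  qed
  also have "\<dots> \<le> measure M ?Cov"
  proof (rule M.finite_measure_mono)
    show "?Cov \<in> sets M" unfolding Cov using V by measurable
    show "VA \<inter> Good \<subseteq> ?Cov"
    proof
      fix \<omega> assume "\<omega> \<in> VA \<inter> Good"
      then have "\<omega> \<in> space M" "emp_cdf_left (\<lambda>j. W i j \<omega>) (m i) (V \<omega>) < c"
        using emp_cdf_left_mono[of "V \<omega>" a "\<lambda>j. W i j \<omega>" "m i"] c(1)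
        by (auto simp: VA_def Good_def b_def)
      then show "\<omega> \<in> ?Cov" unfolding Cov using i by blast
    qed
  qed
  finally show ?thesis .
qed

lemma score_samples:
  fixes Z :: "nat \<Rightarrow> nat \<Rightarrow> 'o \<Rightarrow> 'a" and s :: "'a \<Rightarrow> real"
  assumes M: "prob_space M" and s: "s \<in> borel_measurable N"
    and S: "\<forall>i<d. prob_space (S i) \<and> sets (S i) = sets N"
    and Z: "\<forall>i<d. \<forall>j<m i. Z i j \<in> M \<rightarrow>\<^sub>M N \<and> distr M N (Z i j) = S i"
    and indep: "\<forall>i<d. prob_space.indep_vars M (\<lambda>_. N) (Z i) {..<m i}"
  shows "\<And>i. i < d \<Longrightarrow> real_distribution (distr (S i) borel s)"
    and "\<And>i j. i < d \<Longrightarrow> j < m i \<Longrightarrow> distr M borel (\<lambda>\<omega>. s (Z i j \<omega>)) = distr (S i) borel s"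
    and "\<And>i. i < d \<Longrightarrow> prob_space.indep_vars M (\<lambda>_. borel) (\<lambda>j \<omega>. s (Z i j \<omega>)) {..<m i}"
proof -
  fix i assume i: "i < d"
  have "sets (S i) = sets N" using S i by simp
  then have "s \<in> borel_measurable (S i)"
    using measurable_cong_sets[of "S i" N borel borel] s by simp
  then show "real_distribution (distr (S i) borel s)"
    using prob_space.prob_space_distr[of "S i" s borel] S i
    by (simp add: real_distribution_def real_distribution_axioms_def)
  show "distr M borel (\<lambda>\<omega>. s (Z i j \<omega>)) = distr (S i) borel s" if "j < m i" for j
    using distr_distr[OF s, of "Z i j" M] Z i that by (simp add: comp_def)
  show "prob_space.indep_vars M (\<lambda>_. borel) (\<lambda>j \<omega>. s (Z i j \<omega>)) {..<m i}"
    using indep i by (intro prob_space.indep_vars_compose2[OF M _ s]) simp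
qed

theorem corollary9:
  fixes MX :: "'x measure" and MY :: "'y measure" and s :: "'x \<times> 'y \<Rightarrow> real"
    and S :: "nat \<Rightarrow> ('x \<times> 'y) measure" and d :: nat
    and f :: "real \<Rightarrow> ereal" and \<rho> \<alpha> \<epsilon> :: real
    and M :: "'o measure" and m :: "nat \<Rightarrow> nat"
    and X :: "nat \<Rightarrow> nat \<Rightarrow> 'o \<Rightarrow> 'x" and Y :: "nat \<Rightarrow> nat \<Rightarrow> 'o \<Rightarrow> 'y"
    and Xn :: "'o \<Rightarrow> 'x" and Yn :: "'o \<Rightarrow> 'y" and \<alpha>' :: real
  defines "I \<equiv> {(i, j). i < d \<and> j < m i}"
    and "t \<equiv> \<lambda>\<omega>. quantile (g_fr_inv f \<rho> (1 - \<alpha>'))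
                  (\<lambda>x. Min ((\<lambda>i. emp_cdf (\<lambda>j. s (X i j \<omega>, Y i j \<omega>)) (m i) x) ` {..<d}))"
  assumes alpha'_def: "\<alpha>' = 1 - g_fr f \<rho> (\<epsilon> + g_fr_inv f \<rho>
                  ((1 - \<alpha>) / (1 - 2 * (\<Sum>i<d. exp (- 2 * real (m i) * \<epsilon>\<^sup>2)))))"
    and s_meas: "s \<in> borel_measurable (MX \<Otimes>\<^sub>M MY)"
    and d_pos: "d \<ge> 1"
    and S_dist: "\<forall>i<d. prob_space (S i) \<and> sets (S i) = sets (MX \<Otimes>\<^sub>M MY)"
    and f_ok: "closed_convex_fdiv_fun f"
    and rho_pos: "\<rho> > 0"
    and alpha: "0 < \<alpha>" "\<alpha> < 1"
    and M_prob: "prob_space M"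
    and m_pos: "\<forall>i<d. m i > 0"
    and samples_dist: "\<forall>i<d. \<forall>j<m i. (\<lambda>\<omega>. (X i j \<omega>, Y i j \<omega>)) \<in> M \<rightarrow>\<^sub>M MX \<Otimes>\<^sub>M MY
                   \<and> distr M (MX \<Otimes>\<^sub>M MY) (\<lambda>\<omega>. (X i j \<omega>, Y i j \<omega>)) = S i"
    and samples_indep: "\<forall>i<d. prob_space.indep_vars M (\<lambda>_. MX \<Otimes>\<^sub>M MY)
                                 (\<lambda>j \<omega>. (X i j \<omega>, Y i j \<omega>)) {..<m i}"
    and test_meas: "Xn \<in> M \<rightarrow>\<^sub>M MX" "Yn \<in> M \<rightarrow>\<^sub>M MY"
    and test_dist: "distr M borel (\<lambda>\<omega>. s (Xn \<omega>, Yn \<omega>)) \<in> Pfr f \<rho> s S d"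
    and test_indep: "prob_space.indep_set M
                       (sets (vimage_algebra (space M) (\<lambda>\<omega>. s (Xn \<omega>, Yn \<omega>)) borel))
                       (sets (vimage_algebra (space M) (\<lambda>\<omega>. \<lambda>p\<in>I. s (X (fst p) (snd p) \<omega>, Y (fst p) (snd p) \<omega>))
                                (\<Pi>\<^sub>M p\<in>I. borel)))"
    and eps_pos: "\<epsilon> > 0"
    and well_def1: "1 - 2 * (\<Sum>i<d. exp (- 2 * real (m i) * \<epsilon>\<^sup>2)) > 0"
    and well_def2: "\<epsilon> + g_fr_inv f \<rho>
                  ((1 - \<alpha>) / (1 - 2 * (\<Sum>i<d. exp (- 2 * real (m i) * \<epsilon>\<^sup>2)))) \<le> 1"
  shows "measure M {\<omega> \<in> space M. Yn \<omega> \<in> {y \<in> space MY. s (Xn \<omega>, y) \<le> t \<omega>}} \<ge> 1 - \<alpha>"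
proof -
  let ?den = "1 - 2 * (\<Sum>i<d. exp (- 2 * real (m i) * \<epsilon>\<^sup>2))"
  define \<tau> where "\<tau> = (1 - \<alpha>) / ?den"
  have \<tau>: "0 \<le> \<tau>" using alpha well_def1 by (simp add: \<tau>_def)
  have \<beta>: "\<epsilon> + g_fr_inv f \<rho> \<tau> \<in> {0..1}"
    using g_fr_inv_bounds(1)[OF f_ok _ \<tau>] rho_pos eps_pos well_def2 by (simp add: \<tau>_def)
  have c: "\<epsilon> + g_fr_inv f \<rho> \<tau> \<le> g_fr_inv f \<rho> (1 - \<alpha>')" "g_fr_inv f \<rho> (1 - \<alpha>') \<le> 1"
    using g_fr_inv_g_fr[OF f_ok _ \<beta>] rho_pos unfolding alpha'_def by (simp_all add: \<tau>_def)
  obtain S0 where S0: "S0 \<in> mixtures (\<lambda>i. distr (S i) borel s) d"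
    "absolutely_continuous S0 (distr M borel (\<lambda>\<omega>. s (Xn \<omega>, Yn \<omega>)))"
    "fdiv f (distr M borel (\<lambda>\<omega>. s (Xn \<omega>, Yn \<omega>))) S0 \<le> ereal \<rho>"
    using test_dist by (auto simp: Pfr_def)
  note scores = score_samples[where Z="\<lambda>i j \<omega>. (X i j \<omega>, Y i j \<omega>)",
      OF M_prob s_meas S_dist samples_dist samples_indep]
  have "\<tau> * ?den \<le> measure M {\<omega> \<in> space M. s (Xn \<omega>, Yn \<omega>) \<le> t \<omega>}"
    unfolding t_def
    by (rule robust_conformal_coverage[where V="\<lambda>\<omega>. s (Xn \<omega>, Yn \<omega>)" and W="\<lambda>i j \<omega>. s (X i j \<omega>, Y i j \<omega>)",
          OF M_prob _ _ f_ok _ \<tau> eps_pos c _ _ _ _ S0 test_indep[unfolded I_def]])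
      (use d_pos m_pos rho_pos scores measurable_compose[OF measurable_Pair[OF test_meas] s_meas] in auto)
  also have "{\<omega> \<in> space M. s (Xn \<omega>, Yn \<omega>) \<le> t \<omega>}
      = {\<omega> \<in> space M. Yn \<omega> \<in> {y \<in> space MY. s (Xn \<omega>, y) \<le> t \<omega>}}"
    using measurable_space[OF test_meas(2)] by blast
  finally show ?thesis using well_def1 by (simp add: \<tau>_def)
qed

end
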